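(* Let $f(z)=\sum_{n=0}^{\infty}a_{n}z^{n}$ be an entire function with $a_{0}\cdot a_{n}>0$ for all $n\ge0$, of order $\rho(f)=\limsup_{n\to\infty}\frac{n\log n}{-\log|a_{n}|}<1$, having a nonzero root, and write $\frac{f(z)}{f(0)}=\prod_{n=1}^{\infty}\left(1+\frac{z}{\lambda_{n}}\right)$ with $\sum_{n}1/|\lambda_n|<\infty$, where $\{-\lambda_n\}$ are the zeros of $f$ with multiplicity. Assume there exists $\beta_{0}\in(0,1)$ with $\Re(\lambda_{n})\ge\beta_{0}|\lambda_{n}|>0$ for all $n\in\mathbb{N}$. Define $$\Theta(t)=\sum_{n=1}^{\infty}e^{-\lambda_{n}t},\quad t>0.$$ Then $\Theta\in C^{\infty}(0,\infty)$, and for any $k\in\mathbb{N}_{0}$, any $\alpha$ with $\rho(f)<\alpha<1$, and any $\beta$ with $0<\beta<\beta_{0}\inf\{|\lambda_{n}|:n\in\mathbb{N}\}$, $$\Theta^{(k)}(t)=\mathcal{O}\left(t^{-\alpha-k}\right)\ (t\to0^{+}),\qquad \Theta^{(k)}(t)=\mathcal{O}\left(e^{-\beta t}\right)\ (t\to+\infty).$$ Furthermore, for all $k\in\mathbb{N}_{0}$ and $x\ge0$, $$\int_{0}^{\infty}t^{k}e^{-xt}|\Theta(t)|\,dt\le\frac{k!}{\beta_{0}^{k+1}}\sum_{n=1}^{\infty}\frac{1}{|\lambda_{n}|^{k+1}}<\infty$$ and $$(-1)^{k}\left(\frac{f'(x)}{f(x)}\right)^{(k)}=\sum_{n=1}^{\infty}\frac{k!}{(x+\lambda_{n})^{k+1}}=\int_{0}^{\infty}e^{-xt}t^{k}\Theta(t)\,dt.$$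 *)

theory Defs
  imports "HOL-Analysis.Analysis" "HOL-Library.Landau_Symbols"
begin

definition coeff_order :: "(nat \<Rightarrow> real) \<Rightarrow> ereal" where
  "coeff_order a = limsup (\<lambda>n. ereal (real n * ln (real n) / (- ln \<bar>a n\<bar>)))"

definition vderiv_iter :: "nat \<Rightarrow> (real \<Rightarrow> 'a::real_normed_vector) \<Rightarrow> real \<Rightarrow> 'a" where
  "vderiv_iter k g = ((\<lambda>h t. vector_derivative h (at t)) ^^ k) g"

end

theory Submission
  imports Defs "HOL-Real_Asymp.Real_Asymp"
begin

text \<open>
  Since Re lam_n \<ge> \<beta>0 |lam_n|, the n-th term of the termwise k-th derivative
  \<Sum> (-lam_n)^k e^(-lam_n t) is bounded by |lam_n|^k e^(-\<beta>0 t |lam_n|); this gives local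
  uniform convergence on (0, \<infinity>), hence smoothness, and exponential decay at infinity because
  |lam_n| \<ge> inf |lam|. Near 0 the bound |lam_n|^k e^(-\<beta>0 t |lam_n|) \<le> C |lam_n|^(-\<alpha>) t^(-\<alpha>-k)
  reduces everything to the convergence of \<Sum> |lam_n|^(-\<alpha>). This holds for every \<alpha> above the
  order: coefficients |a_n| \<le> n^(-n/\<sigma>) give log |f(R)| = O(R^\<sigma>), and as every factor
  |1 + R/lam_n| with |lam_n| \<le> R is at least \<surd>2, at most O(R^\<sigma>) of the lam_n lie in the disc
  of radius R.

  Integrating termwise against t^k e^(-xt), dominated by \<Sum> k!/(x + Re lam_n)^(k+1), yields
  \<Sum> k!/(x + lam_n)^(k+1), which is (-1)^k (f'/f)^(k)(x) because log f - log f(0) is the sum of the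
  holomorphic logarithms Ln (1 + z/lam_n) on a half-plane containing [0, \<infinity>).
\<close>

lemma power_mult_exp_neg_le:
  fixes b u :: real
  assumes "b > 0" "u \<ge> 0"
  shows "u ^ N * exp (- b * u) \<le> (real N / b) ^ N"
proof (cases "N = 0")
  case True
  then show ?thesis using assms by simp
next
  case False
  have "(b * u / real N) ^ N \<le> (1 + b * u / real N) ^ N"
    using assms by (intro power_mono) auto
  also have "\<dots> \<le> exp (b * u)"
    using assms False
    by (intro exp_ge_one_plus_x_over_n_power_n) (auto, smt (verit) mult_nonneg_nonneg of_nat_0_le_iff)
  finally have "(real N / b) ^ N * (b * u / real N) ^ N \<le> (real N / b) ^ N * exp (b * u)"
    using assms by (intro mult_left_mono) auto
  moreover have "(real N / b) ^ N * (b * u / real N) ^ N = u ^ N"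
    using assms False by (simp flip: power_mult_distrib)
  ultimately show ?thesis
    by (simp add: exp_minus field_simps)
qed

lemma powr_mult_exp_neg_bounded:
  fixes b s :: real
  assumes "b > 0" "s \<ge> 0"
  obtains C where "C > 0" "\<And>u. u \<ge> 0 \<Longrightarrow> u powr s * exp (- b * u) \<le> C"
proof
  define N where "N = nat \<lceil>s\<rceil>"
  show "0 < 1 + (real N / b) ^ N"
    using assms by (simp add: add_pos_nonneg)
  fix u :: real
  assume u: "u \<ge> 0"
  show "u powr s * exp (- b * u) \<le> 1 + (real N / b) ^ N"
  proof (cases "u \<le> 1")
    case True
    have "u powr s * exp (- b * u) \<le> 1"
      using u True assms by (intro mult_le_one powr_le1) auto
    moreover have "0 \<le> (real N / b) ^ N"
      using assms by simp
    ultimately show ?thesis by linarith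
  next
    case False
    have "s \<le> real N"
      unfolding N_def by linarith
    then have "u powr s \<le> u ^ N"
      using False by (simp add: powr_realpow[symmetric] powr_mono)
    then have "u powr s * exp (- b * u) \<le> u ^ N * exp (- b * u)"
      by (intro mult_right_mono) auto
    also have "\<dots> \<le> (real N / b) ^ N"
      using power_mult_exp_neg_le[OF assms(1) u] .
    finally show ?thesis by simp
  qed
qed

lemma ln_le_powr_div:
  fixes R \<sigma> :: real
  assumes "R > 0" "\<sigma> > 0"
  shows "ln R \<le> R powr \<sigma> / \<sigma>"
proof -
  have "\<sigma> * ln R = ln (R powr \<sigma>)"
    using assms by (simp add: ln_powr)
  also have "\<dots> \<le> R powr \<sigma>"
    using assms by (smt (verit) ln_le_minus_one powr_gt_zero)
  finally show ?thesis
    using assms by (simp add: field_simps)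
qed

lemma exp_neg_mult_ln_mult_power_le:
  fixes R \<sigma> :: real
  assumes "n \<ge> 1" "R > 0" "\<sigma> > 0"
  shows "exp (- (real n * ln (real n)) / \<sigma>) * R ^ n \<le> exp (R powr \<sigma> / \<sigma>) * exp (- 1 / \<sigma>) ^ n"
proof -
  define m where "m = real n"
  have "m > 0"
    using assms unfolding m_def by simp
  have "\<sigma> * ln R - ln m = ln (R powr \<sigma> / m)"
    using assms \<open>m > 0\<close> by (simp add: ln_div ln_powr)
  also have "\<dots> \<le> R powr \<sigma> / m - 1"
    using assms \<open>m > 0\<close> by (intro ln_le_minus_one) simp
  finally have "m * (\<sigma> * ln R - ln m) \<le> m * (R powr \<sigma> / m - 1)"
    using \<open>m > 0\<close> by (intro mult_left_mono) auto
  also have "\<dots> = R powr \<sigma> - m"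
    using \<open>m > 0\<close> by (simp add: field_simps)
  finally have "(m * (\<sigma> * ln R - ln m)) / \<sigma> \<le> (R powr \<sigma> - m) / \<sigma>"
    using assms by (intro divide_right_mono) auto
  then have "- (m * ln m) / \<sigma> + m * ln R \<le> R powr \<sigma> / \<sigma> + m * (- 1 / \<sigma>)"
    using assms by (simp add: field_simps)
  moreover have "R ^ n = exp (m * ln R)"
    using assms by (simp add: m_def exp_of_nat_mult)
  moreover have "exp (- 1 / \<sigma>) ^ n = exp (m * (- 1 / \<sigma>))"
    unfolding m_def by (rule exp_of_nat_mult[symmetric])
  ultimately show ?thesis
    by (simp add: m_def flip: exp_add)
qed

lemma exp_powr_mult_add_power_le:
  fixes A K R \<sigma> :: real
  assumes "A \<ge> 0" "K \<ge> 0" "R \<ge> 1" "\<sigma> > 0"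
  shows "exp (R powr \<sigma> / \<sigma>) * K + A * R ^ N
    \<le> exp ((ln (A + K + 1) + (real N + 1) / \<sigma>) * R powr \<sigma>)"
proof -
  define M where "M = (real N + 1) * (R powr \<sigma> / \<sigma>)"
  have "R powr \<sigma> / \<sigma> \<ge> 0"
    using assms by simp
  then have "1 * (R powr \<sigma> / \<sigma>) \<le> (real N + 1) * (R powr \<sigma> / \<sigma>)"
    by (intro mult_right_mono) auto
  then have "exp (R powr \<sigma> / \<sigma>) \<le> exp M"
    unfolding M_def by simp
  moreover have "R ^ N \<le> exp M"
  proof -
    have "real N * ln R \<le> real N * (R powr \<sigma> / \<sigma>)"
      using ln_le_powr_div[of R \<sigma>] assms by (intro mult_left_mono) auto
    also have "\<dots> \<le> M"
      using \<open>R powr \<sigma> / \<sigma> \<ge> 0\<close> unfolding M_def by (intro mult_right_mono) auto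
    finally have "exp (real N * ln R) \<le> exp M"
      by simp
    then show ?thesis
      using assms by (simp add: exp_of_nat_mult)
  qed
  ultimately have "exp (R powr \<sigma> / \<sigma>) * K + A * R ^ N \<le> exp M * K + A * exp M"
    using assms by (intro add_mono mult_right_mono mult_left_mono) auto
  also have "\<dots> \<le> (A + K + 1) * exp M"
    by (simp add: algebra_simps)
  also have "\<dots> = exp (ln (A + K + 1) + M)"
    using assms by (simp add: exp_add)
  also have "\<dots> \<le> exp ((ln (A + K + 1) + (real N + 1) / \<sigma>) * R powr \<sigma>)"
  proof -
    have "ln (A + K + 1) \<le> ln (A + K + 1) * R powr \<sigma>"
      using assms by (intro mult_le_cancel_left1[THEN iffD2]) (auto simp: ge_one_powr_ge_zero)
    then show ?thesis
      unfolding M_def by (simp add: distrib_right)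
  qed
  finally show ?thesis .
qed

lemma abs_powser_le_exp_powr:
  fixes a :: "nat \<Rightarrow> real"
  assumes "\<sigma> > 0" "N \<ge> 1"
    and coeff_le: "\<And>n. n \<ge> N \<Longrightarrow> \<bar>a n\<bar> \<le> exp (- (real n * ln (real n)) / \<sigma>)"
  obtains C where
    "\<And>R. R \<ge> 1 \<Longrightarrow> summable (\<lambda>n. \<bar>a n\<bar> * R ^ n) \<and> (\<Sum>n. \<bar>a n\<bar> * R ^ n) \<le> exp (C * R powr \<sigma>)"
proof
  define q where "q = exp (- 1 / \<sigma>)"
  have q: "0 < q" "q < 1"
    using assms by (auto simp: q_def)
  define K where "K = 1 / (1 - q)"
  define A where "A = (\<Sum>n<N. \<bar>a n\<bar>)"
  fix R :: real
  assume "R \<ge> 1"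
  define E where "E = exp (R powr \<sigma> / \<sigma>)"
  define b where "b n = (if n \<in> {..<N} then \<bar>a n\<bar> * R ^ N else 0) + E * q ^ n" for n
  have le_b: "\<bar>a n\<bar> * R ^ n \<le> b n" for n
  proof (cases "n < N")
    case True
    then have "\<bar>a n\<bar> * R ^ n \<le> \<bar>a n\<bar> * R ^ N"
      using \<open>R \<ge> 1\<close> by (intro mult_left_mono power_increasing) auto
    then show ?thesis
      using q by (simp add: b_def True E_def add_increasing2)
  next
    case False
    then have "\<bar>a n\<bar> * R ^ n \<le> exp (- (real n * ln (real n)) / \<sigma>) * R ^ n"
      using coeff_le \<open>R \<ge> 1\<close> by (intro mult_right_mono) auto
    also have "\<dots> \<le> E * q ^ n"
      unfolding E_def q_def using False assms \<open>R \<ge> 1\<close> by (intro exp_neg_mult_ln_mult_power_le) auto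
    finally show ?thesis
      using False by (simp add: b_def)
  qed
  have "b sums (A * R ^ N + E * K)"
    unfolding b_def A_def K_def sum_distrib_right using q
    by (intro sums_add sums_If_finite_set sums_mult geometric_sums) auto
  then have summable: "summable (\<lambda>n. \<bar>a n\<bar> * R ^ n)"
    using le_b \<open>R \<ge> 1\<close> by (intro summable_comparison_test[OF _ sums_summable]) auto
  have "(\<Sum>n. \<bar>a n\<bar> * R ^ n) \<le> E * K + A * R ^ N"
    using suminf_le[OF le_b summable sums_summable] sums_unique \<open>b sums _\<close> by (metis add.commute)
  also have "\<dots> \<le> exp ((ln (A + K + 1) + (real N + 1) / \<sigma>) * R powr \<sigma>)"
    unfolding E_def using q assms \<open>R \<ge> 1\<close>
    by (intro exp_powr_mult_add_power_le) (auto simp: K_def A_def intro: sum_nonneg)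
  finally show "summable (\<lambda>n. \<bar>a n\<bar> * R ^ n) \<and>
      (\<Sum>n. \<bar>a n\<bar> * R ^ n) \<le> exp ((ln (A + K + 1) + (real N + 1) / \<sigma>) * R powr \<sigma>)"
    using summable by simp
qed

lemma one_plus_norm_sq_le:
  assumes "Re w \<ge> 0"
  shows "1 + norm w ^ 2 \<le> norm (1 + w) ^ 2"
proof -
  have "norm (1 + w) ^ 2 = (1 + Re w) ^ 2 + (Im w) ^ 2"
    by (simp add: cmod_power2)
  also have "\<dots> = 1 + 2 * Re w + ((Re w) ^ 2 + (Im w) ^ 2)"
    by (simp add: power2_eq_square algebra_simps)
  also have "(Re w) ^ 2 + (Im w) ^ 2 = norm w ^ 2"
    by (simp add: cmod_power2)
  finally show ?thesis
    using assms by simp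
qed

section \<open>Laplace transform of a power times an exponential\<close>

fun laplace_antideriv :: "'a::{real_normed_field,banach} \<Rightarrow> nat \<Rightarrow> 'a \<Rightarrow> 'a" where
  "laplace_antideriv z 0 w = - exp (- (z * w)) / z"
| "laplace_antideriv z (Suc k) w =
     - (w ^ Suc k * exp (- (z * w))) / z + of_nat (Suc k) / z * laplace_antideriv z k w"

lemma laplace_antideriv_has_field_derivative:
  fixes z w :: "'a::{real_normed_field,banach}"
  assumes "z \<noteq> 0"
  shows "(laplace_antideriv z k has_field_derivative w ^ k * exp (- (z * w))) (at w)"
proof (induction k)
  case 0
  show ?case using assms by (auto intro!: derivative_eq_intros)
next
  case (Suc k)
  have "((\<lambda>w. - (w ^ Suc k * exp (- (z * w))) / z) has_field_derivative
      - ((of_nat (Suc k) * w ^ k * exp (- (z * w)) - exp (- (z * w)) * z * w ^ Suc k) / z)) (at w)"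
    using assms by (auto intro!: derivative_eq_intros simp del: power_Suc)
  from DERIV_add[OF this DERIV_cmult[OF Suc.IH, of "of_nat (Suc k) / z"]]
  have "((\<lambda>w. - (w ^ Suc k * exp (- (z * w))) / z + of_nat (Suc k) / z * laplace_antideriv z k w)
      has_field_derivative w ^ Suc k * exp (- (z * w))) (at w)"
    by (rule DERIV_cong) (use assms in \<open>simp add: field_simps\<close>)
  then show ?case
    by (simp only: laplace_antideriv.simps[symmetric])
qed

lemma laplace_antideriv_0:
  fixes z :: "'a::{real_normed_field,banach}"
  assumes "z \<noteq> 0"
  shows "laplace_antideriv z k 0 = - fact k / z ^ (k + 1)"
proof (induction k)
  case (Suc k)
  have "laplace_antideriv z (Suc k) 0 = of_nat (Suc k) / z * (- fact k / z ^ (k + 1))"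
    using Suc by simp
  also have "\<dots> = - fact (Suc k) / z ^ (Suc k + 1)"
    using assms by (simp add: field_simps)
  finally show ?case .
qed simp

lemma of_real_laplace_antideriv:
  "of_real (laplace_antideriv c k t) =
     (laplace_antideriv (of_real c) k (of_real t) :: 'a::{real_normed_field,banach})"
  by (induction k) (simp_all add: of_real_exp)

lemma laplace_antideriv_tendsto_0:
  fixes z :: complex
  assumes "Re z > 0"
  shows "((\<lambda>t. laplace_antideriv z k (of_real t)) \<longlongrightarrow> 0) at_top"
proof (induction k)
  case 0
  have "((\<lambda>t. exp (- Re z * t)) \<longlongrightarrow> 0) at_top"
    using assms by real_asymp
  then have "((\<lambda>t. exp (- Re z * t) / norm z) \<longlongrightarrow> 0) at_top"
    by (rule tendsto_divide_zero)
  then have "((\<lambda>t. norm (laplace_antideriv z 0 (of_real t))) \<longlongrightarrow> 0) at_top"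
    by (simp add: norm_divide norm_exp_eq_Re)
  then show ?case
    by (simp only: tendsto_norm_zero_iff)
next
  case (Suc k)
  have "((\<lambda>t. t ^ Suc k * exp (- Re z * t)) \<longlongrightarrow> 0) at_top"
    using assms by real_asymp
  then have "((\<lambda>t. t ^ Suc k * exp (- Re z * t) / norm z) \<longlongrightarrow> 0) at_top"
    by (rule tendsto_divide_zero)
  then have "((\<lambda>t. norm (- (of_real t ^ Suc k * exp (- (z * of_real t))) / z)) \<longlongrightarrow> 0) at_top"
    by (rule tendsto_cong[THEN iffD1, rotated], use eventually_ge_at_top[of 0] in eventually_elim)
       (simp add: norm_divide norm_mult norm_power norm_exp_eq_Re)
  then have "((\<lambda>t. - (of_real t ^ Suc k * exp (- (z * of_real t))) / z) \<longlongrightarrow> 0) at_top"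
    by (simp only: tendsto_norm_zero_iff)
  moreover have "((\<lambda>t. of_nat (Suc k) / z * laplace_antideriv z k (of_real t))
      \<longlongrightarrow> of_nat (Suc k) / z * 0) at_top"
    by (intro tendsto_mult tendsto_const Suc.IH)
  ultimately show ?case
    using tendsto_add by fastforce
qed

lemma laplace_antideriv_tendsto_0_real:
  fixes c :: real
  assumes "c > 0"
  shows "(laplace_antideriv c k \<longlongrightarrow> 0) at_top"
proof -
  have "((\<lambda>t. complex_of_real (laplace_antideriv c k t)) \<longlongrightarrow> of_real 0) at_top"
    using laplace_antideriv_tendsto_0[of "of_real c" k] assms by (simp add: of_real_laplace_antideriv)
  then show ?thesis
    by (rule tendsto_of_real_iff[THEN iffD1])
qed

lemma einterval_0_infinity: "einterval 0 \<infinity> = {0<..}"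
  by (auto simp: einterval_def zero_ereal_def)

lemma
  fixes c :: real
  assumes "c > 0"
  shows set_integrable_power_mult_exp: "set_integrable lborel {0<..} (\<lambda>t. t ^ k * exp (- c * t))"
    and set_integral_power_mult_exp:
      "(LINT t:{0<..}|lborel. t ^ k * exp (- c * t)) = fact k / c ^ (k + 1)"
proof -
  let ?F = "laplace_antideriv c k"
  have c0: "c \<noteq> 0"
    using assms by simp
  have "(?F \<longlongrightarrow> ?F 0) (at_right 0)"
    using laplace_antideriv_has_field_derivative[of c] assms
    by (intro filterlim_at_split[THEN iffD1, THEN conjunct2] isCont_def[THEN iffD1] DERIV_isCont) auto
  then have at_0: "((?F \<circ> real_of_ereal) \<longlongrightarrow> - fact k / c ^ (k + 1)) (at_right 0)"
    using laplace_antideriv_0[of c] assms by (simp add: zero_ereal_def ereal_tendsto_simps)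
  have at_infinity: "((?F \<circ> real_of_ereal) \<longlongrightarrow> 0) (at_left \<infinity>)"
    using laplace_antideriv_tendsto_0_real[OF assms] by (simp add: ereal_tendsto_simps)
  note FTC = interval_integral_FTC_nonneg[of 0 \<infinity> ?F "\<lambda>t. t ^ k * exp (- (c * t))",
      OF _ laplace_antideriv_has_field_derivative[OF c0] _ _ at_0 at_infinity]
  show "set_integrable lborel {0<..} (\<lambda>t. t ^ k * exp (- c * t))"
    using FTC(1) assms by (auto simp: einterval_0_infinity zero_ereal_def intro!: continuous_intros)
  have "(LBINT t=0..\<infinity>. t ^ k * exp (- c * t)) = fact k / c ^ (k + 1)"
    using FTC(2) assms by (auto simp: einterval_0_infinity zero_ereal_def intro!: continuous_intros)
  then show "(LINT t:{0<..}|lborel. t ^ k * exp (- c * t)) = fact k / c ^ (k + 1)"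
    by (simp add: interval_lebesgue_integral_def einterval_0_infinity)
qed

lemma
  fixes z :: complex
  assumes z: "Re z > 0"
  shows set_integrable_power_mult_cexp:
      "set_integrable lborel {0<..} (\<lambda>t. of_real t ^ k * exp (- (z * of_real t)))"
    and set_integral_power_mult_cexp:
      "(LINT t:{0<..}|lborel. of_real t ^ k * exp (- (z * of_real t))) = fact k / z ^ (k + 1)"
proof -
  have z0: "z \<noteq> 0" using z by auto
  let ?f = "\<lambda>t. complex_of_real t ^ k * exp (- (z * complex_of_real t))"
  let ?F = "\<lambda>t. laplace_antideriv z k (complex_of_real t)"
  show integrable: "set_integrable lborel {0<..} ?f"
  proof (rule set_integrable_bound[OF set_integrable_power_mult_exp[OF z, of k]])
    show "set_borel_measurable lborel {0<..} ?f"
      unfolding set_borel_measurable_def measurable_lborel2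
      by (rule borel_measurable_continuous_on_indicator) (auto intro!: continuous_intros)
    show "AE t in lborel. t \<in> {0<..} \<longrightarrow> norm (?f t) \<le> norm (t ^ k * exp (- Re z * t))"
      by (auto simp: norm_mult norm_power norm_exp_eq_Re)
  qed
  have D: "\<And>t. (?F has_vector_derivative ?f t) (at t)"
    by (rule has_vector_derivative_real_field) (rule laplace_antideriv_has_field_derivative[OF z0])
  have "(?F \<longlongrightarrow> ?F 0) (at_right 0)"
    using D has_vector_derivative_continuous
    by (intro filterlim_at_split[THEN iffD1, THEN conjunct2] isCont_def[THEN iffD1]) blast
  then have "((?F \<circ> real_of_ereal) \<longlongrightarrow> - fact k / z ^ (k + 1)) (at_right 0)"
    using laplace_antideriv_0[OF z0] by (simp add: zero_ereal_def ereal_tendsto_simps)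
  moreover have "((?F \<circ> real_of_ereal) \<longlongrightarrow> 0) (at_left \<infinity>)"
    using laplace_antideriv_tendsto_0[OF z] by (simp add: ereal_tendsto_simps)
  ultimately have "(LBINT t=0..\<infinity>. ?f t) = 0 - (- fact k / z ^ (k + 1))"
    by (intro interval_integral_FTC_integrable[OF _ D])
       (auto simp: einterval_0_infinity integrable zero_ereal_def intro!: continuous_intros)
  then show "(LINT t:{0<..}|lborel. ?f t) = fact k / z ^ (k + 1)"
    by (simp add: interval_lebesgue_integral_def einterval_0_infinity)
qed

section \<open>Convergence exponent from a counting bound\<close>

lemma le_two_powr_nat_ceiling_log:
  fixes r :: real
  assumes "r > 0"
  shows "r \<le> 2 powr real (nat \<lceil>log 2 r\<rceil>)"
proof -
  have "2 powr log 2 r \<le> 2 powr real (nat \<lceil>log 2 r\<rceil>)"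
    by (intro powr_mono) linarith+
  then show ?thesis
    using assms by simp
qed

lemma powr_neg_le_two_powr_nat_ceiling_log:
  fixes r m \<alpha> :: real
  assumes "0 < m" "m \<le> r" "\<alpha> > 0"
  shows "r powr (- \<alpha>) \<le> (m powr (- \<alpha>) + 2 powr \<alpha>) * 2 powr (- \<alpha> * real (nat \<lceil>log 2 r\<rceil>))"
proof (cases "nat \<lceil>log 2 r\<rceil> = 0")
  case True
  have "r powr (- \<alpha>) \<le> m powr (- \<alpha>)"
    using assms by (intro powr_mono2') auto
  then show ?thesis
    using True by (simp add: add_increasing2)
next
  case False
  define j where "j = nat \<lceil>log 2 r\<rceil>"
  have "real j - 1 < log 2 r"
    using False ceiling_correct[of "log 2 r"] unfolding j_def by linarith
  then have "2 powr (real j - 1) < r"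
    using assms by (simp add: less_log_iff)
  then have "r powr (- \<alpha>) \<le> (2 powr (real j - 1)) powr (- \<alpha>)"
    using assms by (intro powr_mono2') auto
  also have "\<dots> = 2 powr \<alpha> * 2 powr (- \<alpha> * real j)"
    by (simp add: powr_powr powr_add[symmetric] algebra_simps)
  also have "\<dots> \<le> (m powr (- \<alpha>) + 2 powr \<alpha>) * 2 powr (- \<alpha> * real j)"
    by (intro mult_right_mono) auto
  finally show ?thesis
    unfolding j_def .
qed

lemma card_le_two_powr_mult_le:
  fixes r :: "nat \<Rightarrow> real"
  assumes card_le: "\<And>R. R \<ge> 1 \<Longrightarrow> real (card {n. r n \<le> R}) \<le> C * R powr \<sigma>"
  shows "real (card {n. r n \<le> 2 powr real y}) * 2 powr (- \<alpha> * real y) \<le> C * (2 powr (\<sigma> - \<alpha>)) ^ y"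
proof -
  have "real (card {n. r n \<le> 2 powr real y}) * 2 powr (- \<alpha> * real y)
      \<le> C * (2 powr real y) powr \<sigma> * 2 powr (- \<alpha> * real y)"
    using card_le[of "2 powr real y"] by (intro mult_right_mono) (auto simp: ge_one_powr_ge_zero)
  also have "\<dots> = C * (2 powr (\<sigma> - \<alpha>)) ^ y"
    by (simp add: powr_powr powr_power powr_add[symmetric] algebra_simps)
  finally show ?thesis .
qed

lemma summable_powr_neg_if_card_le:
  fixes r :: "nat \<Rightarrow> real"
  assumes "0 < m" "\<And>n. m \<le> r n" "\<And>R. finite {n. r n \<le> R}" "0 < \<sigma>" "\<sigma> < \<alpha>"
    and card_le: "\<And>R. R \<ge> 1 \<Longrightarrow> real (card {n. r n \<le> R}) \<le> C * R powr \<sigma>"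
  shows "summable (\<lambda>n. r n powr (- \<alpha>))"
\<comment> \<open>group the terms dyadically according to \<lceil>log 2 (r n)\<rceil>\<close>
proof (rule bounded_imp_summable)
  define j where "j n = nat \<lceil>log 2 (r n)\<rceil>" for n
  define D where "D = m powr (- \<alpha>) + 2 powr \<alpha>"
  define q where "q = 2 powr (\<sigma> - \<alpha>)"
  have q: "0 < q" "q < 1"
    using assms unfolding q_def by (auto intro: powr_less_one)
  have r_pos: "r n > 0" for n
    using assms(1) assms(2)[of n] by linarith
  have "C \<ge> 0"
    using card_le[of 1] by simp
  have geometric: "summable (\<lambda>y. C * q ^ y)"
    using q by (intro summable_mult summable_geometric) simp
  fix N :: nat
  have level_le: "real (card {x\<in>{..N}. j x = y}) * 2 powr (- \<alpha> * real y) \<le> C * q ^ y" for y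
  proof -
    have "{x\<in>{..N}. j x = y} \<subseteq> {n. r n \<le> 2 powr real y}"
      using le_two_powr_nat_ceiling_log[OF r_pos] unfolding j_def by auto
    then have "card {x\<in>{..N}. j x = y} \<le> card {n. r n \<le> 2 powr real y}"
      by (intro card_mono assms(3))
    then have "real (card {x\<in>{..N}. j x = y}) * 2 powr (- \<alpha> * real y)
        \<le> real (card {n. r n \<le> 2 powr real y}) * 2 powr (- \<alpha> * real y)"
      by (intro mult_right_mono) auto
    also have "\<dots> \<le> C * q ^ y"
      unfolding q_def by (rule card_le_two_powr_mult_le[OF card_le])
    finally show ?thesis .
  qed
  have "(\<Sum>n\<le>N. r n powr (- \<alpha>)) \<le> (\<Sum>n\<le>N. D * 2 powr (- \<alpha> * real (j n)))"
    unfolding D_def j_def using assms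
    by (intro sum_mono powr_neg_le_two_powr_nat_ceiling_log) auto
  also have "\<dots> = (\<Sum>y\<in>j ` {..N}. \<Sum>n\<in>{x\<in>{..N}. j x = y}. D * 2 powr (- \<alpha> * real (j n)))"
    by (rule sum.group[symmetric]) auto
  also have "\<dots> = (\<Sum>y\<in>j ` {..N}. D * (real (card {x\<in>{..N}. j x = y}) * 2 powr (- \<alpha> * real y)))"
    by (intro sum.cong refl) (simp add: sum_distrib_left[symmetric])
  also have "\<dots> \<le> (\<Sum>y\<in>j ` {..N}. D * (C * q ^ y))"
    by (intro sum_mono mult_left_mono level_le) (simp add: D_def)
  also have "\<dots> = D * (\<Sum>y\<in>j ` {..N}. C * q ^ y)"
    by (simp add: sum_distrib_left)
  also have "\<dots> \<le> D * (\<Sum>y. C * q ^ y)"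
    using \<open>C \<ge> 0\<close> q by (intro mult_left_mono sum_le_suminf geometric) (auto simp: D_def)
  finally show "(\<Sum>n\<le>N. r n powr (- \<alpha>)) \<le> D * (\<Sum>y. C * q ^ y)" .
qed (simp)

section \<open>The theta series\<close>

locale sector_exponents =
  fixes lam :: "nat \<Rightarrow> complex" and \<beta>0 :: real
  assumes beta0_pos: "0 < \<beta>0"
    and sector: "\<And>n. Re (lam n) \<ge> \<beta>0 * norm (lam n) \<and> \<beta>0 * norm (lam n) > 0"
    and summable_inv_norm: "summable (\<lambda>n. 1 / norm (lam n))"
begin

lemma norm_lam_pos: "norm (lam n) > 0"
  using sector[of n] beta0_pos by (simp add: zero_less_mult_iff)

lemma Re_lam_ge: "Re (lam n) \<ge> \<beta>0 * norm (lam n)"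
  using sector[of n] by simp

lemma Re_lam_pos: "Re (lam n) > 0"
  using sector[of n] by linarith

lemma eventually_norm_lam_gt: "eventually (\<lambda>n. norm (lam n) > R) sequentially"
proof -
  have "(\<lambda>n. 1 / norm (lam n)) \<longlonglongrightarrow> 0"
    using summable_LIMSEQ_zero[OF summable_inv_norm] .
  then have "eventually (\<lambda>n. 1 / norm (lam n) < 1 / (\<bar>R\<bar> + 1)) sequentially"
    by (rule order_tendstoD) simp
  then show ?thesis
    by eventually_elim (use norm_lam_pos in \<open>auto simp: field_simps\<close>)
qed

lemma finite_norm_lam_le: "finite {n. norm (lam n) \<le> R}"
proof -
  obtain N where "\<And>n. n \<ge> N \<Longrightarrow> norm (lam n) > R"
    using eventually_norm_lam_gt[of R] unfolding eventually_sequentially by blast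
  then have "{n. norm (lam n) \<le> R} \<subseteq> {..<N}"
    by (force simp: not_less[symmetric])
  then show ?thesis
    by (rule finite_subset) simp
qed

definition lam_inf :: real where
  "lam_inf = (INF n. norm (lam n))"

lemma lam_inf_le: "lam_inf \<le> norm (lam n)"
  unfolding lam_inf_def by (rule cINF_lower) (auto intro: bdd_belowI[of _ 0])

lemma lam_inf_pos: "lam_inf > 0"
proof -
  define F where "F = {n. norm (lam n) \<le> 1}"
  define m where "m = Min (insert 1 ((\<lambda>n. norm (lam n)) ` F))"
  have "finite F"
    unfolding F_def by (rule finite_norm_lam_le)
  then have "m > 0"
    unfolding m_def using norm_lam_pos by (subst Min_gr_iff) auto
  moreover have "m \<le> norm (lam n)" for n
  proof (cases "n \<in> F")
    case True
    then show ?thesis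
      unfolding m_def using \<open>finite F\<close> by (intro Min_le) auto
  next
    case False
    have "m \<le> 1"
      unfolding m_def using \<open>finite F\<close> by (intro Min_le) auto
    then show ?thesis
      using False by (simp add: F_def)
  qed
  then have "m \<le> lam_inf"
    unfolding lam_inf_def by (intro cINF_greatest) auto
  ultimately show ?thesis
    by linarith
qed

lemma summable_inv_norm_power: "summable (\<lambda>n. 1 / norm (lam n) ^ (k + 1))"
proof (rule summable_comparison_test_ev[OF _ summable_inv_norm])
  show "eventually (\<lambda>n. norm (1 / norm (lam n) ^ (k + 1)) \<le> 1 / norm (lam n)) sequentially"
    using eventually_norm_lam_gt[of 1]
  proof eventually_elim
    case (elim n)
    then have "norm (lam n) \<le> norm (lam n) ^ (k + 1)"
      by (metis One_nat_def le_add2 less_imp_le power_increasing power_one_right)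
    then show ?case
      using norm_lam_pos[of n] by (simp add: frac_le)
  qed
qed

lemma summable_norm_power_mult_exp:
  assumes "b > 0"
  shows "summable (\<lambda>n. norm (lam n) ^ k * exp (- b * norm (lam n)))"
proof (rule summable_comparison_test[OF _ summable_mult[OF summable_inv_norm]])
  define C where "C = (real (k + 1) / b) ^ (k + 1)"
  show "\<exists>N. \<forall>n\<ge>N. norm (norm (lam n) ^ k * exp (- b * norm (lam n))) \<le> C * (1 / norm (lam n))"
  proof (intro exI allI impI)
    fix n :: nat
    have "norm (lam n) * (norm (lam n) ^ k * exp (- b * norm (lam n))) \<le> C"
      using power_mult_exp_neg_le[OF assms, of "norm (lam n)" "k + 1"] by (simp add: C_def mult_ac)
    then show "norm (norm (lam n) ^ k * exp (- b * norm (lam n))) \<le> C * (1 / norm (lam n))"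
      using norm_lam_pos[of n] by (simp add: field_simps)
  qed
qed

lemma one_le_norm_one_plus_div_lam_sq:
  assumes "R \<ge> 0"
  shows "1 \<le> norm (1 + complex_of_real R / lam n) ^ 2"
proof -
  have "Re (complex_of_real R / lam n) \<ge> 0"
    using assms Re_lam_pos[of n] by (simp add: Re_divide')
  from one_plus_norm_sq_le[OF this] show ?thesis
    using zero_le_power2[of "norm (complex_of_real R / lam n)"] by linarith
qed

lemma two_le_norm_one_plus_div_lam_sq:
  assumes "norm (lam n) \<le> R"
  shows "2 \<le> norm (1 + complex_of_real R / lam n) ^ 2"
proof -
  have "R > 0"
    using assms norm_lam_pos[of n] by linarith
  then have "Re (complex_of_real R / lam n) \<ge> 0"
    using Re_lam_pos[of n] by (simp add: Re_divide')
  moreover have "1 \<le> norm (complex_of_real R / lam n)"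
    using assms \<open>R > 0\<close> norm_lam_pos[of n] by (simp add: norm_divide)
  then have "1 \<le> norm (complex_of_real R / lam n) ^ 2"
    by simp
  ultimately show ?thesis
    using one_plus_norm_sq_le[of "complex_of_real R / lam n"] by linarith
qed

definition theta_term :: "nat \<Rightarrow> nat \<Rightarrow> complex \<Rightarrow> complex" where
  "theta_term k n w = (- lam n) ^ k * exp (- (lam n * w))"

definition theta_series :: "nat \<Rightarrow> real \<Rightarrow> complex" where
  "theta_series k t = (\<Sum>n. theta_term k n (of_real t))"

lemma norm_theta_term_le:
  assumes "t \<ge> 0"
  shows "norm (theta_term k n (of_real t)) \<le> norm (lam n) ^ k * exp (- (\<beta>0 * t) * norm (lam n))"
proof -
  have "\<beta>0 * norm (lam n) * t \<le> Re (lam n) * t"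
    using Re_lam_ge assms by (intro mult_right_mono) auto
  then have "exp (- (Re (lam n) * t)) \<le> exp (- (\<beta>0 * t) * norm (lam n))"
    by (simp add: mult_ac)
  then show ?thesis
    by (simp add: theta_term_def norm_mult norm_power norm_exp_eq_Re mult_left_mono)
qed

lemma summable_norm_theta_term:
  assumes "t > 0"
  shows "summable (\<lambda>n. norm (theta_term k n (of_real t)))"
  by (rule summable_comparison_test[OF _ summable_norm_power_mult_exp[of "\<beta>0 * t" k]])
     (use assms beta0_pos norm_theta_term_le in auto)

lemma norm_theta_series_le:
  assumes "t > 0"
  shows "norm (theta_series k t) \<le> (\<Sum>n. norm (lam n) ^ k * exp (- (\<beta>0 * t) * norm (lam n)))"
proof -
  have "norm (theta_series k t) \<le> (\<Sum>n. norm (theta_term k n (of_real t)))"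
    unfolding theta_series_def by (rule summable_norm[OF summable_norm_theta_term[OF assms]])
  also have "\<dots> \<le> (\<Sum>n. norm (lam n) ^ k * exp (- (\<beta>0 * t) * norm (lam n)))"
    using assms beta0_pos
    by (intro suminf_le summable_norm_theta_term summable_norm_power_mult_exp norm_theta_term_le) auto
  finally show ?thesis .
qed

lemma norm_theta_term_le_strip:
  assumes "\<delta> > 0" "Re w \<ge> \<delta>" "\<bar>Im w\<bar> \<le> \<beta>0 * \<delta> / 2"
  shows "norm (theta_term k n w) \<le> norm (lam n) ^ k * exp (- (\<beta>0 * \<delta> / 2) * norm (lam n))"
proof -
  have "\<beta>0 * norm (lam n) * \<delta> \<le> Re (lam n) * Re w"
    using assms Re_lam_ge[of n] Re_lam_pos[of n] beta0_pos norm_lam_pos[of n]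
    by (intro mult_mono) auto
  moreover have "\<bar>Im (lam n) * Im w\<bar> \<le> norm (lam n) * (\<beta>0 * \<delta> / 2)"
    unfolding abs_mult using assms by (intro mult_mono abs_Im_le_cmod) auto
  ultimately have "Re (lam n * w) \<ge> \<beta>0 * \<delta> / 2 * norm (lam n)"
    by (simp add: algebra_simps)
  then show ?thesis
    by (simp add: theta_term_def norm_mult norm_power norm_exp_eq_Re mult_left_mono)
qed

lemma theta_series_has_vector_derivative:
  assumes "t > 0"
  shows "(theta_series k has_vector_derivative theta_series (Suc k) t) (at t)"
proof -
  define \<delta> where "\<delta> = t / 2"
  have \<delta>: "\<delta> > 0" "\<delta> < t"
    using assms by (auto simp: \<delta>_def)
  define S where "S = {w. Re w > \<delta>} \<inter> {w. Im w < \<beta>0 * \<delta> / 2} \<inter> {w. Im w > - (\<beta>0 * \<delta> / 2)}"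
  have "convex S" "open S"
    unfolding S_def
    by (intro convex_Int convex_halfspace_Re_gt convex_halfspace_Im_lt convex_halfspace_Im_gt
        open_Int open_halfspace_Re_gt open_halfspace_Im_lt open_halfspace_Im_gt)+
  have t_in_S: "of_real t \<in> S"
    using \<delta> beta0_pos unfolding S_def by auto
  have "norm (theta_term (Suc k) n w) \<le> norm (lam n) ^ Suc k * exp (- (\<beta>0 * \<delta> / 2) * norm (lam n))"
    if "w \<in> S" for n w
    using that \<delta>(1) by (intro norm_theta_term_le_strip) (auto simp: S_def)
  from Weierstrass_m_test'[OF this summable_norm_power_mult_exp]
  have "uniformly_convergent_on S (\<lambda>N w. \<Sum>n<N. theta_term (Suc k) n w)"
    using \<delta>(1) beta0_pos by simp
  moreover have "(theta_term k n has_field_derivative theta_term (Suc k) n w) (at w within S)" for n w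
    unfolding theta_term_def by (auto intro!: derivative_eq_intros)
  moreover have "summable (\<lambda>n. theta_term k n (of_real t))"
    using summable_norm_theta_term[OF assms] by (rule summable_norm_cancel)
  ultimately have "((\<lambda>w. \<Sum>n. theta_term k n w) has_field_derivative
      (\<Sum>n. theta_term (Suc k) n (of_real t))) (at (of_real t))"
    using \<open>convex S\<close> t_in_S
    by (intro has_field_derivative_series'(2)) (auto simp: interior_open[OF \<open>open S\<close>])
  from has_vector_derivative_real_field[OF this]
  show ?thesis
    unfolding theta_series_def .
qed

lemma theta_series_continuous_on: "continuous_on {0<..} (theta_series k)"
  using has_vector_derivative_continuous[OF theta_series_has_vector_derivative]
  by (intro continuous_at_imp_continuous_on) auto

text \<open>The modulus of the n-th term of t^k e^(-xt) \<Theta>(t) on (0, \<infinity>):\<close>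

definition laplace_majorant :: "nat \<Rightarrow> real \<Rightarrow> nat \<Rightarrow> real \<Rightarrow> real" where
  "laplace_majorant k x n t = indicator {0<..} t *\<^sub>R (t ^ k * exp (- (x + Re (lam n)) * t))"

lemma laplace_majorant_nonneg: "laplace_majorant k x n t \<ge> 0"
  by (simp add: laplace_majorant_def split: split_indicator)

lemma
  assumes "x \<ge> 0"
  shows integrable_laplace_majorant: "integrable lborel (laplace_majorant k x n)"
    and integral_laplace_majorant:
      "integral\<^sup>L lborel (laplace_majorant k x n) = fact k / (x + Re (lam n)) ^ (k + 1)"
proof -
  have "x + Re (lam n) > 0"
    using assms Re_lam_pos[of n] by simp
  from set_integrable_power_mult_exp[OF this, of k] set_integral_power_mult_exp[OF this, of k]
  show "integrable lborel (laplace_majorant k x n)"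
    and "integral\<^sup>L lborel (laplace_majorant k x n) = fact k / (x + Re (lam n)) ^ (k + 1)"
    by (simp_all add: laplace_majorant_def[abs_def] set_integrable_def set_lebesgue_integral_def)
qed

lemma integral_laplace_majorant_le:
  assumes "x \<ge> 0"
  shows "integral\<^sup>L lborel (laplace_majorant k x n) \<le> fact k / \<beta>0 ^ (k + 1) * (1 / norm (lam n) ^ (k + 1))"
proof -
  have "0 < (\<beta>0 * norm (lam n)) ^ (k + 1)"
    using beta0_pos norm_lam_pos[of n] by simp
  moreover have "(\<beta>0 * norm (lam n)) ^ (k + 1) \<le> (x + Re (lam n)) ^ (k + 1)"
    using Re_lam_ge[of n] assms beta0_pos norm_lam_pos[of n] by (intro power_mono) auto
  ultimately have "fact k / (x + Re (lam n)) ^ (k + 1) \<le> fact k / (\<beta>0 * norm (lam n)) ^ (k + 1)"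
    by (intro divide_left_mono) auto
  also have "\<dots> = fact k / \<beta>0 ^ (k + 1) * (1 / norm (lam n) ^ (k + 1))"
    by (simp add: power_mult_distrib)
  finally show ?thesis
    using integral_laplace_majorant[OF assms] by simp
qed

lemma summable_integral_laplace_majorant:
  assumes "x \<ge> 0"
  shows "summable (\<lambda>n. integral\<^sup>L lborel (laplace_majorant k x n))"
proof (rule summable_comparison_test[OF _ summable_mult[OF summable_inv_norm_power]])
  show "\<exists>N. \<forall>n\<ge>N. norm (integral\<^sup>L lborel (laplace_majorant k x n))
      \<le> fact k / \<beta>0 ^ (k + 1) * (1 / norm (lam n) ^ (k + 1))"
    using integral_laplace_majorant_le[OF assms] laplace_majorant_nonneg
    by (simp add: integral_nonneg_AE)
qed

lemma summable_exp_neg_Re_lam: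
  assumes "t > 0"
  shows "summable (\<lambda>n. exp (- Re (lam n) * t))"
  using summable_norm_theta_term[OF assms, of 0] by (simp add: theta_term_def norm_exp_eq_Re)

lemma summable_laplace_majorant:
  assumes "x \<ge> 0"
  shows "summable (\<lambda>n. laplace_majorant k x n t)"
proof (cases "t > 0")
  case True
  have eq: "(\<lambda>n. laplace_majorant k x n t) = (\<lambda>n. t ^ k * exp (- x * t) * exp (- Re (lam n) * t))"
    using True by (simp add: laplace_majorant_def algebra_simps flip: exp_add)
  show ?thesis
    unfolding eq by (rule summable_mult[OF summable_exp_neg_Re_lam[OF True]])
qed (simp add: laplace_majorant_def)

lemma
  assumes "x \<ge> 0"
  shows integrable_suminf_laplace_majorant: "integrable lborel (\<lambda>t. \<Sum>n. laplace_majorant k x n t)"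
    and integral_suminf_laplace_majorant: "integral\<^sup>L lborel (\<lambda>t. \<Sum>n. laplace_majorant k x n t)
      = (\<Sum>n. integral\<^sup>L lborel (laplace_majorant k x n))"
proof -
  have "AE t in lborel. summable (\<lambda>n. norm (laplace_majorant k x n t))"
    using summable_laplace_majorant[OF assms] laplace_majorant_nonneg by simp
  moreover have "summable (\<lambda>n. \<integral>t. norm (laplace_majorant k x n t) \<partial>lborel)"
    using summable_integral_laplace_majorant[OF assms] laplace_majorant_nonneg by simp
  ultimately show "integrable lborel (\<lambda>t. \<Sum>n. laplace_majorant k x n t)"
    and "integral\<^sup>L lborel (\<lambda>t. \<Sum>n. laplace_majorant k x n t)
      = (\<Sum>n. integral\<^sup>L lborel (laplace_majorant k x n))"
    using integrable_suminf integral_suminf integrable_laplace_majorant[OF assms] by blast+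
qed

end

locale theta_function = sector_exponents +
  fixes \<Theta> :: "real \<Rightarrow> complex"
  assumes Theta_eq: "\<And>t. t > 0 \<Longrightarrow> \<Theta> t = theta_series 0 t"
begin

lemma vderiv_iter_Theta: "t > 0 \<Longrightarrow> vderiv_iter k \<Theta> t = theta_series k t"
proof (induction k arbitrary: t)
  case 0
  then show ?case
    by (simp add: vderiv_iter_def Theta_eq)
next
  case (Suc k)
  have "(vderiv_iter k \<Theta> has_vector_derivative theta_series (Suc k) t) (at t)"
    using Suc
    by (intro has_vector_derivative_transform_within_open[OF theta_series_has_vector_derivative
        open_greaterThan[of 0]]) auto
  then show ?case
    by (simp add: vderiv_iter_def vector_derivative_at)
qed

lemma vderiv_iter_Theta_has_vector_derivative:
  assumes "t > 0"
  shows "(vderiv_iter k \<Theta> has_vector_derivative vderiv_iter (Suc k) \<Theta> t) (at t)"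
proof -
  have "(vderiv_iter k \<Theta> has_vector_derivative theta_series (Suc k) t) (at t)"
    using assms vderiv_iter_Theta
    by (intro has_vector_derivative_transform_within_open[OF theta_series_has_vector_derivative
        open_greaterThan[of 0]]) auto
  then show ?thesis
    using vderiv_iter_Theta[OF assms, of "Suc k"] by simp
qed

lemma vderiv_iter_Theta_bigo_at_right_0:
  assumes "\<alpha> > 0" and summable: "summable (\<lambda>n. norm (lam n) powr (- \<alpha>))"
  shows "(\<lambda>t. norm (vderiv_iter k \<Theta> t)) \<in> O[at_right 0](\<lambda>t. t powr (- \<alpha> - real k))"
proof -
  obtain C where C: "C > 0" "\<And>u. u \<ge> 0 \<Longrightarrow> u powr (\<alpha> + real k) * exp (- \<beta>0 * u) \<le> C"
    using powr_mult_exp_neg_bounded[OF beta0_pos, of "\<alpha> + real k"] assms by auto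
  define S where "S = (\<Sum>n. norm (lam n) powr (- \<alpha>))"
  have "norm (norm (vderiv_iter k \<Theta> t)) \<le> S * C * norm (t powr (- \<alpha> - real k))" if "t > 0" for t
  proof -
    have term_le: "norm (lam n) ^ k * exp (- (\<beta>0 * t) * norm (lam n))
        \<le> norm (lam n) powr (- \<alpha>) * (C * t powr (- \<alpha> - real k))" for n
    proof -
      define r where "r = norm (lam n)"
      have "r > 0"
        unfolding r_def by (rule norm_lam_pos)
      then have "r ^ k = r powr (- \<alpha>) * (r * t) powr (\<alpha> + real k) * t powr (- \<alpha> - real k)"
        using \<open>t > 0\<close>
        by (simp add: powr_mult powr_realpow[symmetric] powr_add[symmetric] powr_diff)
           (simp add: powr_add powr_minus field_simps)
      then have "r ^ k * exp (- (\<beta>0 * t) * r) = r powr (- \<alpha>) * t powr (- \<alpha> - real k)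
          * ((r * t) powr (\<alpha> + real k) * exp (- \<beta>0 * (r * t)))"
        by (simp add: mult_ac)
      also have "\<dots> \<le> r powr (- \<alpha>) * t powr (- \<alpha> - real k) * C"
        using C(2)[of "r * t"] \<open>r > 0\<close> \<open>t > 0\<close> by (intro mult_left_mono) auto
      finally show ?thesis
        unfolding r_def by (simp add: mult_ac)
    qed
    have "norm (vderiv_iter k \<Theta> t) \<le> (\<Sum>n. norm (lam n) ^ k * exp (- (\<beta>0 * t) * norm (lam n)))"
      using norm_theta_series_le[OF \<open>t > 0\<close>] vderiv_iter_Theta[OF \<open>t > 0\<close>] by simp
    also have "\<dots> \<le> (\<Sum>n. norm (lam n) powr (- \<alpha>) * (C * t powr (- \<alpha> - real k)))"
      using \<open>t > 0\<close> beta0_pos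
      by (intro suminf_le term_le summable_norm_power_mult_exp summable_mult2 summable) auto
    also have "\<dots> = S * (C * t powr (- \<alpha> - real k))"
      unfolding S_def by (rule suminf_mult2[symmetric, OF summable])
    finally show ?thesis
      by (simp add: mult_ac)
  qed
  then show ?thesis
    by (intro bigoI[where c = "S * C"]) (auto intro: eventually_mono[OF eventually_at_right_less])
qed

lemma vderiv_iter_Theta_bigo_at_top:
  assumes "0 < \<beta>" "\<beta> < \<beta>0 * lam_inf"
  shows "(\<lambda>t. norm (vderiv_iter k \<Theta> t)) \<in> O[at_top](\<lambda>t. exp (- \<beta> * t))"
proof (rule bigoI)
  define S where "S = (\<Sum>n. norm (lam n) ^ k * exp (- \<beta>0 * norm (lam n)))"
  have summable: "summable (\<lambda>n. norm (lam n) ^ k * exp (- \<beta>0 * norm (lam n)))"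
    by (rule summable_norm_power_mult_exp[OF beta0_pos])
  have "norm (norm (vderiv_iter k \<Theta> t)) \<le> exp \<beta> * S * norm (exp (- \<beta> * t))" if "t \<ge> 1" for t
  proof -
    have term_le: "norm (lam n) ^ k * exp (- (\<beta>0 * t) * norm (lam n))
        \<le> norm (lam n) ^ k * exp (- \<beta>0 * norm (lam n)) * (exp \<beta> * exp (- \<beta> * t))" for n
    proof -
      have "\<beta>0 * lam_inf \<le> \<beta>0 * norm (lam n)"
        using lam_inf_le beta0_pos by (intro mult_left_mono) auto
      then have "(\<beta>0 * norm (lam n) - \<beta>) * 1 \<le> (\<beta>0 * norm (lam n) - \<beta>) * t"
        using \<open>t \<ge> 1\<close> assms by (intro mult_left_mono) auto
      then have "- (\<beta>0 * t) * norm (lam n) \<le> - \<beta>0 * norm (lam n) + \<beta> + - \<beta> * t"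
        by (simp add: algebra_simps)
      then have "exp (- (\<beta>0 * t) * norm (lam n)) \<le> exp (- \<beta>0 * norm (lam n)) * (exp \<beta> * exp (- \<beta> * t))"
        by (simp add: exp_add[symmetric])
      then show ?thesis
        by (simp add: mult_left_mono mult.assoc)
    qed
    have "norm (vderiv_iter k \<Theta> t) \<le> (\<Sum>n. norm (lam n) ^ k * exp (- (\<beta>0 * t) * norm (lam n)))"
      using norm_theta_series_le vderiv_iter_Theta \<open>t \<ge> 1\<close> by simp
    also have "\<dots> \<le> (\<Sum>n. norm (lam n) ^ k * exp (- \<beta>0 * norm (lam n)) * (exp \<beta> * exp (- \<beta> * t)))"
      using \<open>t \<ge> 1\<close> beta0_pos
      by (intro suminf_le term_le summable_norm_power_mult_exp summable_mult2 summable) auto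
    also have "\<dots> = S * (exp \<beta> * exp (- \<beta> * t))"
      unfolding S_def by (rule suminf_mult2[symmetric, OF summable])
    finally show ?thesis
      by (simp add: mult_ac)
  qed
  then show "\<forall>\<^sub>F t in at_top. norm (norm (vderiv_iter k \<Theta> t)) \<le> exp \<beta> * S * norm (exp (- \<beta> * t))"
    by (auto intro: eventually_mono[OF eventually_ge_at_top[of 1]])
qed

lemma Theta_continuous_on: "continuous_on {0<..} \<Theta>"
  using theta_series_continuous_on by (rule continuous_on_cong[THEN iffD1, rotated 2]) (auto simp: Theta_eq)

lemma norm_Theta_le:
  assumes "t > 0"
  shows "norm (\<Theta> t) \<le> (\<Sum>n. exp (- Re (lam n) * t))"
proof -
  have "norm (\<Theta> t) \<le> (\<Sum>n. norm (theta_term 0 n (of_real t)))"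
    unfolding Theta_eq[OF assms] theta_series_def
    by (rule summable_norm[OF summable_norm_theta_term[OF assms]])
  then show ?thesis
    by (simp add: theta_term_def norm_exp_eq_Re)
qed

lemma laplace_norm_Theta_le_majorant:
  "indicator {0<..} t *\<^sub>R (t ^ k * exp (- x * t) * norm (\<Theta> t)) \<le> (\<Sum>n. laplace_majorant k x n t)"
proof (cases "t > 0")
  case True
  have "t ^ k * exp (- x * t) * norm (\<Theta> t) \<le> t ^ k * exp (- x * t) * (\<Sum>n. exp (- Re (lam n) * t))"
    using True norm_Theta_le[OF True] by (simp add: mult_left_mono)
  also have "\<dots> = (\<Sum>n. t ^ k * exp (- x * t) * exp (- Re (lam n) * t))"
    by (rule suminf_mult[symmetric, OF summable_exp_neg_Re_lam[OF True]])
  also have "\<dots> = (\<Sum>n. laplace_majorant k x n t)"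
    using True by (simp add: laplace_majorant_def algebra_simps flip: exp_add)
  finally show ?thesis
    using True by simp
qed (simp add: laplace_majorant_def)

lemma
  assumes "x \<ge> 0"
  shows set_integrable_laplace_norm_Theta:
      "set_integrable lborel {0<..} (\<lambda>t. t ^ k * exp (- x * t) * norm (\<Theta> t))"
    and laplace_norm_Theta_le:
      "(LINT t:{0<..}|lborel. t ^ k * exp (- x * t) * norm (\<Theta> t))
         \<le> fact k / \<beta>0 ^ (k + 1) * (\<Sum>n. 1 / norm (lam n) ^ (k + 1))"
proof -
  define F where "F t = indicator {0<..} t *\<^sub>R (t ^ k * exp (- x * t) * norm (\<Theta> t))" for t
  have "F \<in> borel_measurable lborel"
    unfolding F_def measurable_lborel2
    by (intro borel_measurable_continuous_on_indicator continuous_intros continuous_on_norm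
        Theta_continuous_on) auto
  moreover have "0 \<le> F t" for t
    by (simp add: F_def split: split_indicator)
  moreover have "F t \<le> (\<Sum>n. laplace_majorant k x n t)" for t
    unfolding F_def by (rule laplace_norm_Theta_le_majorant)
  ultimately have F_integrable: "integrable lborel F"
    by (intro Bochner_Integration.integrable_bound[OF integrable_suminf_laplace_majorant[OF assms, of k]])
       (auto simp: abs_of_nonneg intro: order_trans[OF _ abs_ge_self])
  then show "set_integrable lborel {0<..} (\<lambda>t. t ^ k * exp (- x * t) * norm (\<Theta> t))"
    unfolding set_integrable_def F_def .
  have "(LINT t:{0<..}|lborel. t ^ k * exp (- x * t) * norm (\<Theta> t)) = integral\<^sup>L lborel F"
    unfolding set_lebesgue_integral_def F_def ..
  also have "\<dots> \<le> (\<Sum>n. integral\<^sup>L lborel (laplace_majorant k x n))"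
    unfolding integral_suminf_laplace_majorant[OF assms, symmetric] F_def
    by (intro integral_mono F_integrable[unfolded F_def] integrable_suminf_laplace_majorant assms
        laplace_norm_Theta_le_majorant)
  also have "\<dots> \<le> (\<Sum>n. fact k / \<beta>0 ^ (k + 1) * (1 / norm (lam n) ^ (k + 1)))"
    using assms
    by (intro suminf_le integral_laplace_majorant_le summable_integral_laplace_majorant
        summable_mult summable_inv_norm_power)
  also have "\<dots> = fact k / \<beta>0 ^ (k + 1) * (\<Sum>n. 1 / norm (lam n) ^ (k + 1))"
    by (rule suminf_mult[OF summable_inv_norm_power])
  finally show "(LINT t:{0<..}|lborel. t ^ k * exp (- x * t) * norm (\<Theta> t))
      \<le> fact k / \<beta>0 ^ (k + 1) * (\<Sum>n. 1 / norm (lam n) ^ (k + 1))" .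
qed

lemma
  assumes "x \<ge> 0"
  shows set_integrable_laplace_Theta:
      "set_integrable lborel {0<..} (\<lambda>t. complex_of_real (exp (- x * t) * t ^ k) * \<Theta> t)"
    and laplace_Theta_sums:
      "(\<lambda>n. complex_of_real (fact k) / (complex_of_real x + lam n) ^ (k + 1)) sums
         (LINT t:{0<..}|lborel. complex_of_real (exp (- x * t) * t ^ k) * \<Theta> t)"
proof -
  define h where "h n t = indicator {0<..} t *\<^sub>R
    (complex_of_real t ^ k * exp (- ((complex_of_real x + lam n) * complex_of_real t)))" for n t
  have Re_pos: "Re (complex_of_real x + lam n) > 0" for n
    using assms Re_lam_pos[of n] by simp
  have h_integrable: "integrable lborel (h n)" for n
    using set_integrable_power_mult_cexp[OF Re_pos] unfolding h_def set_integrable_def .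
  have h_integral: "integral\<^sup>L lborel (h n) = fact k / (complex_of_real x + lam n) ^ (k + 1)" for n
    using set_integral_power_mult_cexp[OF Re_pos] unfolding h_def set_lebesgue_integral_def .
  have norm_h: "norm (h n t) = laplace_majorant k x n t" for n t
    by (cases "t > 0") (simp_all add: h_def laplace_majorant_def norm_mult norm_power norm_exp_eq_Re algebra_simps)
  have AE_summable: "AE t in lborel. summable (\<lambda>n. norm (h n t))"
    using summable_laplace_majorant[OF assms] by (simp add: norm_h)
  have summable_integrals: "summable (\<lambda>n. \<integral>t. norm (h n t) \<partial>lborel)"
    using summable_integral_laplace_majorant[OF assms] by (simp add: norm_h)
  note termwise = integrable_suminf[OF h_integrable AE_summable summable_integrals]
    sums_integral[OF h_integrable AE_summable summable_integrals]
  have sum_h: "(\<Sum>n. h n t) = indicator {0<..} t *\<^sub>R (complex_of_real (exp (- x * t) * t ^ k) * \<Theta> t)" for t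
  proof (cases "t > 0")
    case True
    have "h n t = complex_of_real (exp (- x * t) * t ^ k) * exp (- (lam n * complex_of_real t))" for n
      using True by (simp add: h_def algebra_simps flip: exp_add exp_of_real)
    moreover have "summable (\<lambda>n. exp (- (lam n * complex_of_real t)))"
      using summable_norm_cancel[OF summable_norm_theta_term[OF True, of 0]] by (simp add: theta_term_def)
    ultimately show ?thesis
      using True by (simp add: suminf_mult Theta_eq theta_series_def theta_term_def)
  qed (simp add: h_def)
  show "set_integrable lborel {0<..} (\<lambda>t. complex_of_real (exp (- x * t) * t ^ k) * \<Theta> t)"
    using termwise(1) unfolding sum_h set_integrable_def .
  show "(\<lambda>n. complex_of_real (fact k) / (complex_of_real x + lam n) ^ (k + 1)) sums
      (LINT t:{0<..}|lborel. complex_of_real (exp (- x * t) * t ^ k) * \<Theta> t)"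
    using termwise(2) unfolding sum_h h_integral set_lebesgue_integral_def by simp
qed

end

section \<open>The logarithmic derivative of the product\<close>

locale entire_product = sector_exponents +
  fixes f :: "complex \<Rightarrow> complex" and a :: "nat \<Rightarrow> real"
  assumes f_series: "\<And>z. (\<lambda>n. complex_of_real (a n) * z ^ n) sums f z"
    and coeff_pos: "\<And>n. a 0 * a n > 0"
    and product: "\<And>z. (\<lambda>n. 1 + z / lam n) has_prod (f z / f 0)"
begin

lemma coeff_nonzero: "a n \<noteq> 0"
  using coeff_pos[of n] by auto

lemma f_0: "f 0 = complex_of_real (a 0)"
  using f_series[of 0] by (metis sums_unique2 powser_sums_zero)

lemma f_0_nonzero: "f 0 \<noteq> 0"
  using coeff_nonzero by (simp add: f_0)

text \<open>A neighbourhood of [0, \<infinity>) on which no factor 1 + z / lam n meets the branch cut of Ln:\<close>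

definition half_plane :: "complex set" where
  "half_plane = {z. Re z > - (\<beta>0 * lam_inf / 2)}"

lemma open_half_plane: "open half_plane"
  unfolding half_plane_def by (rule open_halfspace_Re_gt)

lemma convex_half_plane: "convex half_plane"
  unfolding half_plane_def by (rule convex_halfspace_Re_gt)

lemma of_real_in_half_plane: "x \<ge> 0 \<Longrightarrow> complex_of_real x \<in> half_plane"
  unfolding half_plane_def using mult_pos_pos[OF beta0_pos lam_inf_pos] by simp

lemma Re_add_lam_ge:
  assumes "z \<in> half_plane"
  shows "Re (z + lam n) \<ge> \<beta>0 * norm (lam n) / 2"
proof -
  have "\<beta>0 * lam_inf \<le> \<beta>0 * norm (lam n)"
    using lam_inf_le beta0_pos by (intro mult_left_mono) auto
  then show ?thesis
    using assms Re_lam_ge[of n] unfolding half_plane_def by simp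
qed

lemma norm_add_lam_ge: "z \<in> half_plane \<Longrightarrow> norm (z + lam n) \<ge> \<beta>0 * norm (lam n) / 2"
  using Re_add_lam_ge[of z n] complex_Re_le_cmod[of "z + lam n"] by linarith

lemma add_lam_nonzero:
  assumes "z \<in> half_plane"
  shows "z + lam n \<noteq> 0"
proof
  assume "z + lam n = 0"
  then have "\<beta>0 * norm (lam n) / 2 \<le> 0"
    using Re_add_lam_ge[OF assms, of n] by simp
  moreover have "\<beta>0 * norm (lam n) > 0"
    using beta0_pos norm_lam_pos[of n] by simp
  ultimately show False
    by linarith
qed

definition partial_fraction_term :: "nat \<Rightarrow> nat \<Rightarrow> complex \<Rightarrow> complex" where
  "partial_fraction_term j n z = (-1) ^ j * fact j / (z + lam n) ^ (j + 1)"

definition partial_fraction :: "nat \<Rightarrow> complex \<Rightarrow> complex" where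
  "partial_fraction j z = (\<Sum>n. partial_fraction_term j n z)"

lemma norm_partial_fraction_term_le:
  assumes "z \<in> half_plane"
  shows "norm (partial_fraction_term j n z) \<le> fact j * (2 / \<beta>0) ^ (j + 1) * (1 / norm (lam n) ^ (j + 1))"
proof -
  have "0 < (\<beta>0 * norm (lam n) / 2) ^ (j + 1)"
    using beta0_pos norm_lam_pos[of n] by simp
  moreover have "(\<beta>0 * norm (lam n) / 2) ^ (j + 1) \<le> norm (z + lam n) ^ (j + 1)"
    using norm_add_lam_ge[OF assms, of n] beta0_pos norm_lam_pos[of n] by (intro power_mono) auto
  ultimately have "fact j / norm (z + lam n) ^ (j + 1) \<le> fact j / (\<beta>0 * norm (lam n) / 2) ^ (j + 1)"
    by (intro divide_left_mono) auto
  also have "\<dots> = fact j * (2 / \<beta>0) ^ (j + 1) * (1 / norm (lam n) ^ (j + 1))"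
    by (simp add: power_mult_distrib power_divide field_simps)
  finally show ?thesis
    by (simp add: partial_fraction_term_def norm_divide norm_mult norm_power)
qed

lemma summable_partial_fraction_bound:
  "summable (\<lambda>n. fact j * (2 / \<beta>0) ^ (j + 1) * (1 / norm (lam n) ^ (j + 1)))"
  by (intro summable_mult summable_inv_norm_power)

lemma summable_partial_fraction_term:
  "z \<in> half_plane \<Longrightarrow> summable (\<lambda>n. partial_fraction_term j n z)"
  by (rule summable_comparison_test[OF _ summable_partial_fraction_bound])
     (use norm_partial_fraction_term_le in auto)

lemma uniformly_convergent_partial_fraction:
  "uniformly_convergent_on half_plane (\<lambda>N z. \<Sum>n<N. partial_fraction_term j n z)"
  by (rule Weierstrass_m_test'[OF norm_partial_fraction_term_le summable_partial_fraction_bound])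

lemma partial_fraction_term_has_field_derivative:
  assumes "z \<in> half_plane"
  shows "(partial_fraction_term j n has_field_derivative partial_fraction_term (Suc j) n z) (at z)"
  using add_lam_nonzero[OF assms, of n] unfolding partial_fraction_term_def [abs_def]
  by (auto intro!: derivative_eq_intros simp: divide_simps) (cases j, simp_all add: algebra_simps)

lemma partial_fraction_has_field_derivative:
  assumes "z \<in> half_plane"
  shows "(partial_fraction j has_field_derivative partial_fraction (Suc j) z) (at z)"
proof -
  have "0 \<in> half_plane"
    using of_real_in_half_plane[of 0] by simp
  have "\<And>n w. w \<in> half_plane \<Longrightarrow>
      (partial_fraction_term j n has_field_derivative partial_fraction_term (Suc j) n w) (at w within half_plane)"
    using partial_fraction_term_has_field_derivative has_field_derivative_at_within by blast
  from has_field_derivative_series'(2)[OF convex_half_plane this uniformly_convergent_partial_fraction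
      \<open>0 \<in> half_plane\<close> summable_partial_fraction_term[OF \<open>0 \<in> half_plane\<close>]]
  show ?thesis
    unfolding partial_fraction_def using assms by (simp add: interior_open[OF open_half_plane])
qed

lemma higher_deriv_partial_fraction:
  "z \<in> half_plane \<Longrightarrow> (deriv ^^ j) (partial_fraction 0) z = partial_fraction j z"
proof (induction j arbitrary: z)
  case (Suc j)
  have "(deriv ^^ Suc j) (partial_fraction 0) z = deriv (partial_fraction j) z"
    using eventually_nhds_in_open[OF open_half_plane Suc.prems]
    by (simp, intro deriv_cong_ev) (auto elim!: eventually_mono intro: Suc.IH)
  also have "\<dots> = partial_fraction (Suc j) z"
    by (rule DERIV_imp_deriv[OF partial_fraction_has_field_derivative[OF Suc.prems]])
  finally show ?case .
qed simp

definition log_factor :: "nat \<Rightarrow> complex \<Rightarrow> complex" where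
  "log_factor n z = Ln ((z + lam n) / lam n)"

definition log_product :: "complex \<Rightarrow> complex" where
  "log_product z = (\<Sum>n. log_factor n z)"

lemma add_lam_div_lam_notin_nonpos_Reals:
  assumes "z \<in> half_plane"
  shows "(z + lam n) / lam n \<notin> \<real>\<^sub>\<le>\<^sub>0"
proof
  assume "(z + lam n) / lam n \<in> \<real>\<^sub>\<le>\<^sub>0"
  then obtain s where "s \<le> 0" "(z + lam n) / lam n = complex_of_real s"
    by (auto elim!: nonpos_Reals_cases)
  then have "Re (z + lam n) = s * Re (lam n)"
    using norm_lam_pos[of n] by (simp add: field_simps)
  also have "\<dots> \<le> 0"
    using \<open>s \<le> 0\<close> Re_lam_pos[of n] by (simp add: mult_nonpos_nonneg)
  moreover have "\<beta>0 * norm (lam n) > 0"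
    using beta0_pos norm_lam_pos[of n] by simp
  ultimately show False
    using Re_add_lam_ge[OF assms, of n] by linarith
qed

lemma log_factor_has_field_derivative:
  assumes "z \<in> half_plane"
  shows "(log_factor n has_field_derivative partial_fraction_term 0 n z) (at z)"
proof -
  have "lam n \<noteq> 0"
    using norm_lam_pos[of n] by auto
  have "((\<lambda>z. (z + lam n) / lam n) has_field_derivative 1 / lam n) (at z)"
    using \<open>lam n \<noteq> 0\<close> by (auto intro!: derivative_eq_intros)
  from DERIV_chain2[OF has_field_derivative_Ln[OF add_lam_div_lam_notin_nonpos_Reals[OF assms]] this]
  have "(log_factor n has_field_derivative inverse ((z + lam n) / lam n) * (1 / lam n)) (at z)"
    unfolding log_factor_def[abs_def] .
  moreover have "inverse ((z + lam n) / lam n) * (1 / lam n) = partial_fraction_term 0 n z"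
    using \<open>lam n \<noteq> 0\<close> add_lam_nonzero[OF assms, of n] by (simp add: partial_fraction_term_def)
  ultimately show ?thesis
    by simp
qed

lemma log_product_has_field_derivative:
  assumes "z \<in> half_plane"
  shows "summable (\<lambda>n. log_factor n z)" "(log_product has_field_derivative partial_fraction 0 z) (at z)"
proof -
  have "0 \<in> half_plane"
    using of_real_in_half_plane[of 0] by simp
  have "\<And>n w. w \<in> half_plane \<Longrightarrow>
      (log_factor n has_field_derivative partial_fraction_term 0 n w) (at w within half_plane)"
    using log_factor_has_field_derivative has_field_derivative_at_within by blast
  note series = has_field_derivative_series'[OF convex_half_plane this
      uniformly_convergent_partial_fraction \<open>0 \<in> half_plane\<close>]
  have "summable (\<lambda>n. log_factor n 0)"
    using norm_lam_pos by (simp add: log_factor_def)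
  with series assms show "summable (\<lambda>n. log_factor n z)"
    and "(log_product has_field_derivative partial_fraction 0 z) (at z)"
    unfolding log_product_def partial_fraction_def by (simp_all add: interior_open[OF open_half_plane])
qed

lemma f_eq_exp_log_product:
  assumes "z \<in> half_plane"
  shows "f z = f 0 * exp (log_product z)"
proof -
  have "exp (log_factor n z) = 1 + z / lam n" for n
  proof -
    have "lam n \<noteq> 0"
      using norm_lam_pos[of n] by auto
    then have "(z + lam n) / lam n \<noteq> 0"
      using add_lam_nonzero[OF assms, of n] by simp
    then show ?thesis
      using \<open>lam n \<noteq> 0\<close> by (simp add: log_factor_def add_divide_distrib)
  qed
  then have "exp (\<Sum>n<N. log_factor n z) = (\<Prod>n<N. 1 + z / lam n)" for N
    by (simp add: exp_sum)
  moreover have "(\<lambda>N. exp (\<Sum>n<N. log_factor n z)) \<longlonglongrightarrow> exp (log_product z)"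
    unfolding log_product_def
    by (intro tendsto_exp summable_LIMSEQ log_product_has_field_derivative(1)[OF assms])
  ultimately have "(\<lambda>N. \<Prod>n<N. 1 + z / lam n) \<longlonglongrightarrow> exp (log_product z)"
    by simp
  then have "f z / f 0 = exp (log_product z)"
    using LIMSEQ_unique has_prod_imp_tendsto'[OF product] by blast
  then show ?thesis
    using f_0_nonzero by (simp add: field_simps)
qed

lemma log_deriv_eq_partial_fraction:
  assumes "z \<in> half_plane"
  shows "deriv f z / f z = partial_fraction 0 z"
proof -
  have "((\<lambda>w. f 0 * exp (log_product w)) has_field_derivative
      f 0 * (exp (log_product z) * partial_fraction 0 z)) (at z)"
    by (intro DERIV_cmult DERIV_chain2[OF DERIV_exp log_product_has_field_derivative(2)[OF assms]])
  then have "(f has_field_derivative f 0 * (exp (log_product z) * partial_fraction 0 z)) (at z)"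
    by (rule has_field_derivative_transform_within_open[OF _ open_half_plane assms])
       (simp add: f_eq_exp_log_product)
  then show ?thesis
    using f_eq_exp_log_product[OF assms] f_0_nonzero by (simp add: DERIV_imp_deriv)
qed

lemma higher_log_deriv_sums:
  assumes "x \<ge> 0"
  shows "(\<lambda>n. complex_of_real (fact k) / (complex_of_real x + lam n) ^ (k + 1))
    sums ((-1) ^ k * (deriv ^^ k) (\<lambda>z. deriv f z / f z) (complex_of_real x))"
proof -
  have x: "complex_of_real x \<in> half_plane"
    by (rule of_real_in_half_plane[OF assms])
  have "(deriv ^^ k) (\<lambda>z. deriv f z / f z) (complex_of_real x) = (deriv ^^ k) (partial_fraction 0) (complex_of_real x)"
    using eventually_nhds_in_open[OF open_half_plane x]
    by (intro higher_deriv_cong_ev) (auto elim!: eventually_mono simp: log_deriv_eq_partial_fraction)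
  also have "\<dots> = partial_fraction k (complex_of_real x)"
    by (rule higher_deriv_partial_fraction[OF x])
  finally have "(-1) ^ k * (deriv ^^ k) (\<lambda>z. deriv f z / f z) (complex_of_real x)
      = (\<Sum>n. (-1) ^ k * partial_fraction_term k n (complex_of_real x))"
    unfolding partial_fraction_def by (simp add: suminf_mult summable_partial_fraction_term[OF x])
  moreover have "(\<lambda>n. (-1) ^ k * partial_fraction_term k n (complex_of_real x)) sums
      (\<Sum>n. (-1) ^ k * partial_fraction_term k n (complex_of_real x))"
    by (intro summable_sums summable_mult summable_partial_fraction_term[OF x])
  ultimately show ?thesis
    by (simp add: partial_fraction_term_def)
qed

section \<open>Order and counting of the zeros\<close>

lemma eventually_abs_coeff_lt_1: "eventually (\<lambda>n. \<bar>a n\<bar> < 1) sequentially"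
proof -
  have "(\<lambda>n. complex_of_real (a n) * 1 ^ n) \<longlonglongrightarrow> 0"
    using f_series[of 1] by (intro summable_LIMSEQ_zero sums_summable)
  then have "(\<lambda>n. \<bar>a n\<bar>) \<longlonglongrightarrow> 0"
    using tendsto_norm_zero by fastforce
  then show ?thesis
    by (rule order_tendstoD) simp
qed

lemma coeff_order_nonneg: "coeff_order a \<ge> 0"
  unfolding coeff_order_def
proof (rule le_Limsup)
  show "eventually (\<lambda>n. 0 \<le> ereal (real n * ln (real n) / - ln \<bar>a n\<bar>)) sequentially"
    using eventually_abs_coeff_lt_1 eventually_ge_at_top[of 1]
  proof eventually_elim
    case (elim n)
    then have "ln \<bar>a n\<bar> < 0"
      using coeff_nonzero[of n] by simp
    moreover have "real n * ln (real n) \<ge> 0"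
      using elim by simp
    ultimately show ?case
      by (simp add: divide_nonneg_neg)
  qed
qed simp

lemma abs_coeff_le_exp:
  assumes "\<sigma> > 0" "coeff_order a < ereal \<sigma>"
  obtains N where "N \<ge> 1" "\<And>n. n \<ge> N \<Longrightarrow> \<bar>a n\<bar> \<le> exp (- (real n * ln (real n)) / \<sigma>)"
proof -
  have "eventually (\<lambda>n. ereal (real n * ln (real n) / - ln \<bar>a n\<bar>) < ereal \<sigma>) sequentially"
    using assms(2) unfolding coeff_order_def by (rule Limsup_lessD)
  then have "eventually (\<lambda>n. n \<ge> 1 \<and> \<bar>a n\<bar> \<le> exp (- (real n * ln (real n)) / \<sigma>)) sequentially"
    using eventually_abs_coeff_lt_1 eventually_ge_at_top[of 1]
  proof eventually_elim
    case (elim n)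
    define L where "L = - ln \<bar>a n\<bar>"
    have "L > 0"
      using elim coeff_nonzero[of n] unfolding L_def by simp
    then have "real n * ln (real n) < \<sigma> * L"
      using elim(1) unfolding L_def by (simp add: field_simps)
    then have "exp (- L) \<le> exp (- (real n * ln (real n)) / \<sigma>)"
      using assms(1) by (simp add: field_simps)
    moreover have "exp (- L) = \<bar>a n\<bar>"
      unfolding L_def using coeff_nonzero[of n] by simp
    ultimately show ?case
      using elim by simp
  qed
  then obtain N where "\<And>n. n \<ge> N \<Longrightarrow> n \<ge> 1 \<and> \<bar>a n\<bar> \<le> exp (- (real n * ln (real n)) / \<sigma>)"
    unfolding eventually_sequentially by blast
  then show ?thesis
    using that[of N] by blast
qed

lemma norm_f_le_exp_powr:
  assumes "\<sigma> > 0" "coeff_order a < ereal \<sigma>"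
  obtains C where "\<And>R. R \<ge> 1 \<Longrightarrow> norm (f (complex_of_real R)) \<le> exp (C * R powr \<sigma>)"
proof -
  obtain N where N: "N \<ge> 1" "\<And>n. n \<ge> N \<Longrightarrow> \<bar>a n\<bar> \<le> exp (- (real n * ln (real n)) / \<sigma>)"
    by (rule abs_coeff_le_exp[OF assms]) blast
  obtain C where C: "\<And>R. R \<ge> 1 \<Longrightarrow>
      summable (\<lambda>n. \<bar>a n\<bar> * R ^ n) \<and> (\<Sum>n. \<bar>a n\<bar> * R ^ n) \<le> exp (C * R powr \<sigma>)"
    using abs_powser_le_exp_powr[OF assms(1) N] by metis
  have "norm (f (complex_of_real R)) \<le> exp (C * R powr \<sigma>)" if "R \<ge> 1" for R
  proof -
    have norm_eq: "norm (complex_of_real (a n) * complex_of_real R ^ n) = \<bar>a n\<bar> * R ^ n" for n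
      using that by (simp add: norm_mult norm_power)
    have "norm (f (complex_of_real R)) = norm (\<Sum>n. complex_of_real (a n) * complex_of_real R ^ n)"
      using f_series[of "complex_of_real R"] by (simp add: sums_iff)
    also have "\<dots> \<le> (\<Sum>n. \<bar>a n\<bar> * R ^ n)"
      using summable_norm[of "\<lambda>n. complex_of_real (a n) * complex_of_real R ^ n"] C[OF that]
      by (simp add: norm_eq)
    also have "\<dots> \<le> exp (C * R powr \<sigma>)"
      using C[OF that] by simp
    finally show ?thesis .
  qed
  then show ?thesis
    using that by blast
qed

lemma two_power_card_le:
  assumes "R > 0"
  shows "2 ^ card {n. norm (lam n) \<le> R} \<le> (norm (f (complex_of_real R)) / norm (f 0)) ^ 2"
\<comment> \<open>in the product for f(R)/f(0), each factor with |lam n| \<le> R has squared modulus at least 2,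
  all others at least 1\<close>
proof -
  define F where "F = {n. norm (lam n) \<le> R}"
  define g where "g n = norm (1 + complex_of_real R / lam n) ^ 2" for n
  obtain N where N: "F \<subseteq> {..<N}"
    using finite_norm_lam_le[of R] unfolding F_def finite_nat_iff_bounded by blast
  have "eventually (\<lambda>M. 2 ^ card F \<le> norm (\<Prod>n<M. 1 + complex_of_real R / lam n) ^ 2) sequentially"
    using eventually_ge_at_top[of N]
  proof eventually_elim
    case (elim M)
    have "(2::real) ^ card F \<le> 1 * (\<Prod>n\<in>F. g n)"
      using prod_mono[of F "\<lambda>_. 2" g] two_le_norm_one_plus_div_lam_sq by (simp add: F_def g_def)
    also have "\<dots> \<le> (\<Prod>n\<in>{..<M} - F. g n) * (\<Prod>n\<in>F. g n)"
      using one_le_norm_one_plus_div_lam_sq assms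
      by (intro mult_right_mono prod_ge_1 prod_nonneg) (auto simp: g_def)
    also have "\<dots> = (\<Prod>n<M. g n)"
      using N elim by (intro prod.subset_diff[symmetric]) auto
    also have "\<dots> = norm (\<Prod>n<M. 1 + complex_of_real R / lam n) ^ 2"
      unfolding g_def by (simp add: prod_norm[symmetric] prod_power_distrib)
    finally show ?case .
  qed
  moreover have "(\<lambda>M. norm (\<Prod>n<M. 1 + complex_of_real R / lam n) ^ 2)
      \<longlonglongrightarrow> norm (f (complex_of_real R) / f 0) ^ 2"
    by (intro tendsto_intros has_prod_imp_tendsto'[OF product])
  ultimately have "2 ^ card F \<le> norm (f (complex_of_real R) / f 0) ^ 2"
    by (intro tendsto_lowerbound) auto
  then show ?thesis
    unfolding F_def by (simp add: norm_divide)
qed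

lemma card_norm_lam_le_powr:
  assumes "\<sigma> > 0" "coeff_order a < ereal \<sigma>"
  obtains C' where "\<And>R. R \<ge> 1 \<Longrightarrow> real (card {n. norm (lam n) \<le> R}) \<le> C' * R powr \<sigma>"
proof -
  obtain C where C: "\<And>R. R \<ge> 1 \<Longrightarrow> norm (f (complex_of_real R)) \<le> exp (C * R powr \<sigma>)"
    using norm_f_le_exp_powr[OF assms] by metis
  define c0 where "c0 = norm (f 0)"
  have "c0 > 0"
    using f_0_nonzero unfolding c0_def by simp
  have "real (card {n. norm (lam n) \<le> R}) \<le> 2 * (\<bar>C\<bar> + \<bar>ln c0\<bar>) / ln 2 * R powr \<sigma>"
    if "R \<ge> 1" for R
  proof -
    define c where "c = card {n. norm (lam n) \<le> R}"
    have "1 \<le> R powr \<sigma>"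
      using that assms by (simp add: ge_one_powr_ge_zero)
    have "(2::real) ^ c \<le> (norm (f (complex_of_real R)) / c0) ^ 2"
      using two_power_card_le[of R] that unfolding c_def c0_def by simp
    also have "\<dots> \<le> (exp (C * R powr \<sigma>) / c0) ^ 2"
      using C[OF that] \<open>c0 > 0\<close> by (intro power_mono divide_right_mono) auto
    finally have "ln ((2::real) ^ c) \<le> ln ((exp (C * R powr \<sigma>) / c0) ^ 2)"
      using \<open>c0 > 0\<close> by (subst ln_le_cancel_iff) auto
    then have "real c * ln 2 \<le> 2 * (C * R powr \<sigma> - ln c0)"
      using \<open>c0 > 0\<close> by (simp add: ln_realpow ln_div)
    also have "\<dots> \<le> 2 * ((\<bar>C\<bar> + \<bar>ln c0\<bar>) * R powr \<sigma>)"
    proof -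
      have "- ln c0 \<le> \<bar>ln c0\<bar> * 1"
        by simp
      also have "\<dots> \<le> \<bar>ln c0\<bar> * R powr \<sigma>"
        using \<open>1 \<le> R powr \<sigma>\<close> by (intro mult_left_mono) auto
      finally have "- ln c0 \<le> \<bar>ln c0\<bar> * R powr \<sigma>" .
      moreover have "C * R powr \<sigma> \<le> \<bar>C\<bar> * R powr \<sigma>"
        using \<open>1 \<le> R powr \<sigma>\<close> by (intro mult_right_mono) auto
      ultimately show ?thesis
        by (simp add: algebra_simps)
    qed
    finally show ?thesis
      unfolding c_def by (simp add: field_simps)
  qed
  then show ?thesis
    using that by blast
qed

lemma summable_norm_lam_powr_neg:
  assumes "coeff_order a < ereal \<alpha>"
  shows "\<alpha> > 0" "summable (\<lambda>n. norm (lam n) powr (- \<alpha>))"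
proof -
  obtain \<rho> where \<rho>: "coeff_order a = ereal \<rho>" "0 \<le> \<rho>" "\<rho> < \<alpha>"
    using coeff_order_nonneg assms by (cases "coeff_order a") auto
  then show "\<alpha> > 0"
    by simp
  define \<sigma> where "\<sigma> = (\<rho> + \<alpha>) / 2"
  have \<sigma>: "0 < \<sigma>" "\<sigma> < \<alpha>" "coeff_order a < ereal \<sigma>"
    using \<rho> by (auto simp: \<sigma>_def)
  obtain C' where "\<And>R. R \<ge> 1 \<Longrightarrow> real (card {n. norm (lam n) \<le> R}) \<le> C' * R powr \<sigma>"
    using card_norm_lam_le_powr[OF \<sigma>(1,3)] by metis
  with \<sigma>(1,2) show "summable (\<lambda>n. norm (lam n) powr (- \<alpha>))"
    using lam_inf_pos lam_inf_le finite_norm_lam_le by (intro summable_powr_neg_if_card_le)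
qed

end

theorem lemma2:
  fixes a :: "nat \<Rightarrow> real" and f :: "complex \<Rightarrow> complex"
    and lam :: "nat \<Rightarrow> complex" and \<beta>0 :: real
    and \<Theta> :: "real \<Rightarrow> complex"
  assumes f_series: "\<And>z. (\<lambda>n. complex_of_real (a n) * z ^ n) sums f z"
    and coeff_pos: "\<And>n. a 0 * a n > 0"
    and order_lt1: "coeff_order a < 1"
    and nonzero_root: "\<exists>z. z \<noteq> 0 \<and> f z = 0"
    and product: "\<And>z. (\<lambda>n. 1 + z / lam n) has_prod (f z / f 0)"
    and summable_inv: "summable (\<lambda>n. 1 / norm (lam n))"
    and \<beta>0: "0 < \<beta>0" "\<beta>0 < 1"
    and sector: "\<And>n. Re (lam n) \<ge> \<beta>0 * norm (lam n) \<and> \<beta>0 * norm (lam n) > 0"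
    and \<Theta>_def: "\<And>t. t > 0 \<Longrightarrow> \<Theta> t = (\<Sum>n. exp (- (lam n * complex_of_real t)))"
  shows
    "(\<forall>k. \<forall>t>0. (vderiv_iter k \<Theta> has_vector_derivative vderiv_iter (Suc k) \<Theta> t) (at t))
     \<and> (\<forall>(k::nat) (\<alpha>::real). coeff_order a < ereal \<alpha> \<and> \<alpha> < 1 \<longrightarrow>
          (\<lambda>t. norm (vderiv_iter k \<Theta> t)) \<in> O[at_right 0](\<lambda>t. t powr (- \<alpha> - real k)))
     \<and> (\<forall>(k::nat) (\<beta>::real). 0 < \<beta> \<and> \<beta> < \<beta>0 * (INF n. norm (lam n)) \<longrightarrow>
          (\<lambda>t. norm (vderiv_iter k \<Theta> t)) \<in> O[at_top](\<lambda>t. exp (- \<beta> * t)))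
     \<and> (\<forall>(k::nat) (x::real). x \<ge> 0 \<longrightarrow>
          set_integrable lborel {0<..} (\<lambda>t. t ^ k * exp (- x * t) * norm (\<Theta> t))
        \<and> (LINT t:{0<..}|lborel. t ^ k * exp (- x * t) * norm (\<Theta> t))
            \<le> fact k / \<beta>0 ^ (k + 1) * (\<Sum>n. 1 / norm (lam n) ^ (k + 1))
        \<and> summable (\<lambda>n. 1 / norm (lam n) ^ (k + 1)))
     \<and> (\<forall>(k::nat) (x::real). x \<ge> 0 \<longrightarrow>
          (\<lambda>n. complex_of_real (fact k) / (complex_of_real x + lam n) ^ (k + 1))
            sums ((-1) ^ k * (deriv ^^ k) (\<lambda>z. deriv f z / f z) (complex_of_real x))
        \<and> set_integrable lborel {0<..} (\<lambda>t. complex_of_real (exp (- x * t) * t ^ k) * \<Theta> t)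
        \<and> (-1) ^ k * (deriv ^^ k) (\<lambda>z. deriv f z / f z) (complex_of_real x)
            = (LINT t:{0<..}|lborel. complex_of_real (exp (- x * t) * t ^ k) * \<Theta> t))"
proof -
  interpret sector_exponents lam \<beta>0
    using \<beta>0 sector summable_inv by unfold_locales auto
  interpret theta_function lam \<beta>0 \<Theta>
    by unfold_locales (simp add: \<Theta>_def theta_series_def theta_term_def)
  interpret entire_product lam \<beta>0 f a
    using f_series coeff_pos product by unfold_locales auto
  have laplace_eq: "(-1) ^ k * (deriv ^^ k) (\<lambda>z. deriv f z / f z) (complex_of_real x)
      = (LINT t:{0<..}|lborel. complex_of_real (exp (- x * t) * t ^ k) * \<Theta> t)" if "x \<ge> 0" for k x
    using sums_unique2[OF higher_log_deriv_sums[OF that] laplace_Theta_sums[OF that]] .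
  show ?thesis
    by (intro conjI allI impI; (elim conjE)?)
       (blast intro: vderiv_iter_Theta_has_vector_derivative vderiv_iter_Theta_bigo_at_right_0
         summable_norm_lam_powr_neg vderiv_iter_Theta_bigo_at_top[unfolded lam_inf_def]
         set_integrable_laplace_norm_Theta laplace_norm_Theta_le summable_inv_norm_power
         higher_log_deriv_sums set_integrable_laplace_Theta laplace_eq)+
qed

end
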